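(* Let $\mu_1\in\mathbb{R}$, $\sigma_1,\sigma_a,\sigma_b>0$ and $k>0$. Consider three stocks with positive prices $p_{1t},p_{2t},p_{3t}$ at discrete times $t$, such that $$\log(p_{1,t+1})=\log(p_{1t})+\mu_1+\delta_{1,t+1},\quad \epsilon_{at}:=\log(p_{2t})-\log(p_{1t}),\quad \epsilon_{bt}:=\log(p_{3t})-\log(p_{1t}),$$ where the $\delta_{1t}$ are i.i.d. $N(0,\sigma_1^2)$, the $\epsilon_{at}$ are i.i.d. $N(0,\sigma_a^2)$, the $\epsilon_{bt}$ are i.i.d. $N(0,\sigma_b^2)$, and the three families $(\delta_{1t})_t$, $(\epsilon_{at})_t$, $(\epsilon_{bt})_t$ are mutually independent. Define stock returns $r_{i,t+1}=p_{i,t+1}/p_{it}-1$, signals $$S_{at}=\mathbb{1}\{\epsilon_{at}\le -k\sigma_a\}-\mathbb{1}\{\epsilon_{at}\ge k\sigma_a\},\qquad S_{bt}=\mathbb{1}\{\epsilon_{bt}\le -k\sigma_b\}-\mathbb{1}\{\epsilon_{bt}\ge k\sigma_b\},$$ and pair returns $r_{a,t+1}=S_{at}(r_{2,t+1}-r_{1,t+1})$, $r_{b,t+1}=S_{bt}(r_{3,t+1}-r_{1,t+1})$. Then $$\operatorname{Cov}(r_{a,t},r_{b,t})=\big(e^{\sigma_1^2}-1\big)\,\mathbf{E}[r_{a,t}]\,\mathbf{E}[r_{b,t}].$$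
   Context: Pairs $a=$ (stock 1, stock 2) and $b=$ (stock 1, stock 3) are two cointegrated pairs sharing stock 1. *)

theory Defs
  imports "HOL-Probability.Probability"
begin

definition ret :: "(nat \<Rightarrow> real) \<Rightarrow> nat \<Rightarrow> real" where
  "ret p t = p (Suc t) / p t - 1"

definition signal :: "real \<Rightarrow> real \<Rightarrow> real \<Rightarrow> real" where
  "signal k \<sigma> e = (if e \<le> - k * \<sigma> then 1 else 0) - (if e \<ge> k * \<sigma> then 1 else 0)"

definition pair_ret :: "real \<Rightarrow> real \<Rightarrow> (nat \<Rightarrow> real) \<Rightarrow> (nat \<Rightarrow> real) \<Rightarrow> (nat \<Rightarrow> real) \<Rightarrow> nat \<Rightarrow> real" where
  "pair_ret k \<sigma> eps p q t = signal k \<sigma> (eps t) * (ret q t - ret p t)"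

definition cov :: "'a measure \<Rightarrow> ('a \<Rightarrow> real) \<Rightarrow> ('a \<Rightarrow> real) \<Rightarrow> real" where
  "cov M X Y = (\<integral>\<omega>. X \<omega> * Y \<omega> \<partial>M) - (\<integral>\<omega>. X \<omega> \<partial>M) * (\<integral>\<omega>. Y \<omega> \<partial>M)"

text \<open>Joint family of all innovations: index (0,t) = delta_1t, (1,t) = eps_at, (2,t) = eps_bt.\<close>
definition innov :: "(nat \<Rightarrow> 'a \<Rightarrow> real) \<Rightarrow> (nat \<Rightarrow> 'a \<Rightarrow> real) \<Rightarrow> (nat \<Rightarrow> 'a \<Rightarrow> real) \<Rightarrow> nat \<times> nat \<Rightarrow> 'a \<Rightarrow> real" where
  "innov d ea eb i = (if fst i = 0 then d (snd i) else if fst i = 1 then ea (snd i) else eb (snd i))"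

end

(*
  Both pair returns contain the gross return G = p1(t+1)/p1(t) = exp(mu1 + delta1(t+1)) of the
  common stock: r_a = G A and r_b = G B, where A = S_a(t) (exp(eps_a(t+1) - eps_a(t)) - 1) and
  B is the analogue for eps_b. The factors G, A, B are functions of disjoint sets of independent
  innovations, hence independent, so Cov(GA, GB) = (E[G^2] - E[G]^2) E[A] E[B]. For the
  lognormal G, E[G^2] = exp(sigma1^2) E[G]^2, and E[GA] = E[G] E[A], E[GB] = E[G] E[B].
*)
theory Submission
  imports Defs
begin

lemma pair_ret_eq_growth_mult:
  assumes pos: "\<And>t. p t > 0" "\<And>t. q t > 0"
    and e: "\<And>t. e t = ln (q t) - ln (p t)"
  shows "pair_ret k \<sigma> e p q s = p (Suc s) / p s * (signal k \<sigma> (e s) * (exp (e (Suc s) - e s) - 1))"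
proof -
  have "exp (e t) = q t / p t" for t
    using e[of t] pos by (simp add: exp_diff)
  then have "exp (e (Suc s) - e s) = (q (Suc s) / p (Suc s)) / (q s / p s)"
    by (simp add: exp_diff)
  then show ?thesis
    unfolding pair_ret_def ret_def using pos[of s] pos[of "Suc s"] by (simp add: field_simps)
qed

lemma has_bochner_integral_normal_density_exp:
  fixes \<sigma> c :: real
  assumes "\<sigma> > 0"
  shows "has_bochner_integral lborel (\<lambda>x. normal_density 0 \<sigma> x * exp (c * x)) (exp (c\<^sup>2 * \<sigma>\<^sup>2 / 2))"
proof -
  \<comment> \<open>Completing the square: the tilted density is the normal density with mean \<open>c \<sigma>\<^sup>2\<close>.\<close>
  have shift: "normal_density 0 \<sigma> x * exp (c * x) = exp (c\<^sup>2 * \<sigma>\<^sup>2 / 2) * normal_density (c * \<sigma>\<^sup>2) \<sigma> x" for x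
  proof -
    have "-(x - 0)\<^sup>2 / (2 * \<sigma>\<^sup>2) + c * x = c\<^sup>2 * \<sigma>\<^sup>2 / 2 + (-(x - c * \<sigma>\<^sup>2)\<^sup>2 / (2 * \<sigma>\<^sup>2))"
      using assms by (simp add: field_simps power2_eq_square)
    then show ?thesis
      unfolding normal_density_def by (simp add: exp_add[symmetric] algebra_simps)
  qed
  have "has_bochner_integral lborel (normal_density (c * \<sigma>\<^sup>2) \<sigma>) 1"
    using assms has_bochner_integral_integrable[OF integrable_normal_density] by simp
  from has_bochner_integral_mult_right[OF this, of "exp (c\<^sup>2 * \<sigma>\<^sup>2 / 2)"]
  show ?thesis unfolding shift by simp
qed

lemma
  assumes "distributed M lborel X (\<lambda>x. ennreal (normal_density 0 \<sigma> x))" "\<sigma> > 0"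
  shows integrable_normal_exp: "integrable M (\<lambda>\<omega>. exp (c * X \<omega>))"
    and integral_normal_exp: "(\<integral>\<omega>. exp (c * X \<omega>) \<partial>M) = exp (c\<^sup>2 * \<sigma>\<^sup>2 / 2)"
  using distributed_integrable[OF assms(1), of "\<lambda>x. exp (c * x)"]
    distributed_integral[OF assms(1), of "\<lambda>x. exp (c * x)"]
    has_bochner_integral_normal_density_exp[OF assms(2), of c]
  by (simp_all add: has_bochner_integral_iff)

lemma
  assumes "distributed M lborel X (\<lambda>x. ennreal (normal_density 0 \<sigma> x))" "\<sigma> > 0"
  shows integrable_lognormal: "integrable M (\<lambda>\<omega>. exp (\<mu> + X \<omega>))"
    and integrable_lognormal_square: "integrable M (\<lambda>\<omega>. exp (\<mu> + X \<omega>) ^ 2)"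
    and lognormal_second_moment:
      "(\<integral>\<omega>. exp (\<mu> + X \<omega>) ^ 2 \<partial>M) = exp (\<sigma>\<^sup>2) * (\<integral>\<omega>. exp (\<mu> + X \<omega>) \<partial>M)\<^sup>2"
proof -
  have lin: "exp (\<mu> + X \<omega>) = exp \<mu> * exp (1 * X \<omega>)"
    and sq: "exp (\<mu> + X \<omega>) ^ 2 = exp (2 * \<mu>) * exp (2 * X \<omega>)" for \<omega>
    by (simp_all add: exp_add[symmetric] power2_eq_square algebra_simps)
  show "integrable M (\<lambda>\<omega>. exp (\<mu> + X \<omega>))"
    unfolding lin by (intro integrable_mult_right integrable_normal_exp[OF assms])
  show "integrable M (\<lambda>\<omega>. exp (\<mu> + X \<omega>) ^ 2)"
    unfolding sq by (intro integrable_mult_right integrable_normal_exp[OF assms])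
  have "(\<integral>\<omega>. exp (\<mu> + X \<omega>) \<partial>M) = exp \<mu> * exp (\<sigma>\<^sup>2 / 2)"
    unfolding lin using integral_normal_exp[OF assms, of 1] by simp
  then have "(\<integral>\<omega>. exp (\<mu> + X \<omega>) \<partial>M)\<^sup>2 = exp (2 * \<mu>) * exp (\<sigma>\<^sup>2)"
    by (simp add: power_mult_distrib exp_double[symmetric] power2_eq_square exp_add[symmetric])
  moreover have "(\<integral>\<omega>. exp (\<mu> + X \<omega>) ^ 2 \<partial>M) = exp (2 * \<mu>) * exp (2 * \<sigma>\<^sup>2)"
    unfolding sq by (simp add: integral_normal_exp[OF assms])
  ultimately show "(\<integral>\<omega>. exp (\<mu> + X \<omega>) ^ 2 \<partial>M) = exp (\<sigma>\<^sup>2) * (\<integral>\<omega>. exp (\<mu> + X \<omega>) \<partial>M)\<^sup>2"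
    by (simp add: exp_add[symmetric])
qed

lemma abs_signal_le_1: "\<bar>signal k \<sigma> x\<bar> \<le> 1"
  unfolding signal_def by auto

lemma borel_measurable_signal [measurable]: "signal k \<sigma> \<in> borel_measurable borel"
  unfolding signal_def by measurable

lemma exp_diff_le: "exp ((x::real) - y) \<le> exp (2 * x) + exp (- 2 * y)"
proof -
  have "2 * (exp x * exp (- y)) \<le> (exp x)\<^sup>2 + (exp (- y))\<^sup>2"
    using sum_squares_bound[of "exp x" "exp (- y)"] by simp
  moreover have "exp (x - y) = exp x * exp (- y)" "(exp x)\<^sup>2 = exp (2 * x)" "(exp (- y))\<^sup>2 = exp (- 2 * y)"
    by (simp_all add: exp_add[symmetric] power2_eq_square)
  moreover have "0 \<le> exp x * exp (- y)" by simp
  ultimately show ?thesis by linarith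
qed

lemma (in prob_space) integrable_signal_mult_exp_diff:
  assumes X: "distributed M lborel X (\<lambda>x. ennreal (normal_density 0 \<sigma> x))" "\<sigma> > 0"
    and Y: "distributed M lborel Y (\<lambda>x. ennreal (normal_density 0 \<sigma>' x))" "\<sigma>' > 0"
  shows "integrable M (\<lambda>\<omega>. signal k \<tau> (X \<omega>) * (exp (Y \<omega> - X \<omega>) - 1))"
proof (rule Bochner_Integration.integrable_bound)
  show "integrable M (\<lambda>\<omega>. 1 + exp (2 * Y \<omega>) + exp (- 2 * X \<omega>))"
    by (intro Bochner_Integration.integrable_add integrable_const
        integrable_normal_exp[OF X] integrable_normal_exp[OF Y])
  have [measurable]: "X \<in> borel_measurable M" "Y \<in> borel_measurable M"
    using distributed_measurable[OF X(1)] distributed_measurable[OF Y(1)] by simp_all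
  show "(\<lambda>\<omega>. signal k \<tau> (X \<omega>) * (exp (Y \<omega> - X \<omega>) - 1)) \<in> borel_measurable M"
    by measurable
  have "\<bar>signal k \<tau> x * (exp (y - x) - 1)\<bar> \<le> 1 + exp (2 * y) + exp (- 2 * x)" for x y
  proof -
    have "\<bar>signal k \<tau> x * (exp (y - x) - 1)\<bar> \<le> \<bar>exp (y - x) - 1\<bar>"
      using abs_signal_le_1 by (simp add: abs_mult mult_left_le_one_le)
    also have "\<dots> \<le> 1 + exp (y - x)"
      by (simp add: abs_le_iff add_nonneg_nonneg)
    finally show ?thesis using exp_diff_le[of y x] by simp
  qed
  then show "AE \<omega> in M. norm (signal k \<tau> (X \<omega>) * (exp (Y \<omega> - X \<omega>) - 1))
      \<le> norm (1 + exp (2 * Y \<omega>) + exp (- 2 * X \<omega>))"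
    by (auto intro!: AE_I2 simp: add_pos_pos)
qed

lemma (in prob_space) integral_indep_vars_mult:
  fixes X :: "'i \<Rightarrow> 'a \<Rightarrow> real"
  assumes "indep_vars (\<lambda>_. borel) X I" "i \<in> I" "j \<in> I" "i \<noteq> j"
    and "integrable M (X i)" "integrable M (X j)"
  shows "(\<integral>\<omega>. X i \<omega> * X j \<omega> \<partial>M) = (\<integral>\<omega>. X i \<omega> \<partial>M) * (\<integral>\<omega>. X j \<omega> \<partial>M)"
proof -
  have "indep_vars (\<lambda>_. borel) X {i, j}"
    using assms by (intro indep_vars_subset[OF assms(1)]) auto
  then have "(\<integral>\<omega>. (\<Prod>k\<in>{i, j}. X k \<omega>) \<partial>M) = (\<Prod>k\<in>{i, j}. \<integral>\<omega>. X k \<omega> \<partial>M)"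
    by (rule indep_vars_lebesgue_integral[rotated]) (use assms in auto)
  with \<open>i \<noteq> j\<close> show ?thesis by simp
qed

lemma (in prob_space) indep_vars_innov_factors:
  fixes d ea eb :: "nat \<Rightarrow> 'a \<Rightarrow> real"
  assumes indep: "indep_vars (\<lambda>_. borel) (innov d ea eb) ({0, 1, 2} \<times> UNIV)"
    and [measurable]: "f \<in> borel_measurable borel"
    and g: "case_prod g \<in> borel_measurable (borel \<Otimes>\<^sub>M borel)"
    and h: "case_prod h \<in> borel_measurable (borel \<Otimes>\<^sub>M borel)"
  shows "indep_vars (\<lambda>_. borel)
    (\<lambda>j \<omega>. if j = 0 then f (d (Suc s) \<omega>)
           else if j = 1 then g (ea s \<omega>) (ea (Suc s) \<omega>)
           else h (eb s \<omega>) (eb (Suc s) \<omega>)) {0, 1, 2::nat}"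
proof -
  define K where "K j = (if j = 0 then {(0::nat, Suc s)} else {(j, s), (j, Suc s)})" for j :: nat
  define F where "F j x = (if j = 0 then f (x (0, Suc s))
      else if j = 1 then g (x (1, s)) (x (1, Suc s)) else h (x (2, s)) (x (2, Suc s)))"
    for j :: nat and x :: "nat \<times> nat \<Rightarrow> real"
  have "indep_vars (\<lambda>j. PiM (K j) (\<lambda>_. borel)) (\<lambda>j \<omega>. restrict (\<lambda>i. innov d ea eb i \<omega>) (K j)) {0, 1, 2}"
    by (rule indep_vars_restrict[OF indep]) (auto simp: K_def disjoint_family_on_def)
  then have "indep_vars (\<lambda>_. borel) (\<lambda>j \<omega>. F j (restrict (\<lambda>i. innov d ea eb i \<omega>) (K j))) {0, 1, 2}"
  proof (rule indep_vars_compose2)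
    have pair: "(\<lambda>x :: nat \<times> nat \<Rightarrow> real. (x a, x b)) \<in> PiM J (\<lambda>_. borel) \<rightarrow>\<^sub>M borel \<Otimes>\<^sub>M borel"
      if "a \<in> J" "b \<in> J" for a b and J :: "(nat \<times> nat) set"
      using that by measurable
    have [measurable]: "(\<lambda>x. g (x a) (x b)) \<in> borel_measurable (PiM J (\<lambda>_. borel))"
      "(\<lambda>x. h (x a) (x b)) \<in> borel_measurable (PiM J (\<lambda>_. borel))"
      if "a \<in> J" "b \<in> J" for a b and J :: "(nat \<times> nat) set"
      using measurable_compose[OF pair[OF that] g] measurable_compose[OF pair[OF that] h] by simp_all
    show "F j \<in> borel_measurable (PiM (K j) (\<lambda>_. borel))" if "j \<in> {0, 1, 2}" for j
      using that unfolding F_def K_def by auto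
  qed
  then show ?thesis
    by (rule indep_vars_cong[THEN iffD1, rotated 3]) (auto simp: F_def K_def innov_def)
qed

lemma cov_cong:
  assumes "\<And>\<omega>. \<omega> \<in> space M \<Longrightarrow> X \<omega> = X' \<omega>" "\<And>\<omega>. \<omega> \<in> space M \<Longrightarrow> Y \<omega> = Y' \<omega>"
  shows "cov M X Y = cov M X' Y'"
  unfolding cov_def using assms by (simp cong: Bochner_Integration.integral_cong)

lemma (in prob_space) cov_mult_common_factor:
  fixes X :: "nat \<Rightarrow> 'a \<Rightarrow> real"
  assumes indep: "indep_vars (\<lambda>_. borel) X {0, 1, 2}"
    and int: "\<And>i. i \<in> {0, 1, 2} \<Longrightarrow> integrable M (X i)" "integrable M (\<lambda>\<omega>. X 0 \<omega> ^ 2)"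
  shows "cov M (\<lambda>\<omega>. X 0 \<omega> * X 1 \<omega>) (\<lambda>\<omega>. X 0 \<omega> * X 2 \<omega>)
    = ((\<integral>\<omega>. X 0 \<omega> ^ 2 \<partial>M) - (\<integral>\<omega>. X 0 \<omega> \<partial>M)\<^sup>2) * (\<integral>\<omega>. X 1 \<omega> \<partial>M) * (\<integral>\<omega>. X 2 \<omega> \<partial>M)"
proof -
  define Y where "Y i = (if i = 0 then (\<lambda>\<omega>. X 0 \<omega> ^ 2) else X i)" for i
  have Y_eq: "Y = (\<lambda>i \<omega>. (if i = 0 then (\<lambda>x. x ^ 2) else id) (X i \<omega>))"
    by (simp add: Y_def fun_eq_iff)
  have "indep_vars (\<lambda>_. borel) Y {0, 1, 2}"
    unfolding Y_eq by (rule indep_vars_compose2[OF indep]) auto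
  then have "(\<integral>\<omega>. (\<Prod>i\<in>{0, 1, 2}. Y i \<omega>) \<partial>M) = (\<Prod>i\<in>{0, 1, 2}. \<integral>\<omega>. Y i \<omega> \<partial>M)"
    by (rule indep_vars_lebesgue_integral[rotated]) (use int in \<open>auto simp: Y_def\<close>)
  then have prod: "(\<integral>\<omega>. X 0 \<omega> * X 1 \<omega> * (X 0 \<omega> * X 2 \<omega>) \<partial>M)
      = (\<integral>\<omega>. X 0 \<omega> ^ 2 \<partial>M) * (\<integral>\<omega>. X 1 \<omega> \<partial>M) * (\<integral>\<omega>. X 2 \<omega> \<partial>M)"
    by (simp add: Y_def power2_eq_square algebra_simps)
  have E1: "(\<integral>\<omega>. X 0 \<omega> * X 1 \<omega> \<partial>M) = (\<integral>\<omega>. X 0 \<omega> \<partial>M) * (\<integral>\<omega>. X 1 \<omega> \<partial>M)"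
    and E2: "(\<integral>\<omega>. X 0 \<omega> * X 2 \<omega> \<partial>M) = (\<integral>\<omega>. X 0 \<omega> \<partial>M) * (\<integral>\<omega>. X 2 \<omega> \<partial>M)"
    by (rule integral_indep_vars_mult[OF indep]; use int in simp)+
  show ?thesis
    unfolding cov_def prod E1 E2 by (simp add: power2_eq_square algebra_simps)
qed

lemma (in prob_space) cov_mult_lognormal_common_factor:
  fixes X :: "nat \<Rightarrow> 'a \<Rightarrow> real"
  assumes indep: "indep_vars (\<lambda>_. borel) X {0, 1, 2}"
    and D: "distributed M lborel D (\<lambda>x. ennreal (normal_density 0 \<sigma> x))" "\<sigma> > 0"
    and X0: "X 0 = (\<lambda>\<omega>. exp (\<mu> + D \<omega>))"
    and int: "integrable M (X 1)" "integrable M (X 2)"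
  shows "cov M (\<lambda>\<omega>. X 0 \<omega> * X 1 \<omega>) (\<lambda>\<omega>. X 0 \<omega> * X 2 \<omega>)
    = (exp (\<sigma>\<^sup>2) - 1) * (\<integral>\<omega>. X 0 \<omega> * X 1 \<omega> \<partial>M) * (\<integral>\<omega>. X 0 \<omega> * X 2 \<omega> \<partial>M)"
proof -
  have int_X: "integrable M (X i)" if "i \<in> {0, 1, 2}" for i
    using that int integrable_lognormal[OF D] X0 by auto
  have E1: "(\<integral>\<omega>. X 0 \<omega> * X 1 \<omega> \<partial>M) = (\<integral>\<omega>. X 0 \<omega> \<partial>M) * (\<integral>\<omega>. X 1 \<omega> \<partial>M)"
    and E2: "(\<integral>\<omega>. X 0 \<omega> * X 2 \<omega> \<partial>M) = (\<integral>\<omega>. X 0 \<omega> \<partial>M) * (\<integral>\<omega>. X 2 \<omega> \<partial>M)"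
    by (rule integral_indep_vars_mult[OF indep]; use int_X in simp)+
  have second_moment: "(\<integral>\<omega>. X 0 \<omega> ^ 2 \<partial>M) = exp (\<sigma>\<^sup>2) * (\<integral>\<omega>. X 0 \<omega> \<partial>M)\<^sup>2"
    unfolding X0 by (rule lognormal_second_moment[OF D])
  have "cov M (\<lambda>\<omega>. X 0 \<omega> * X 1 \<omega>) (\<lambda>\<omega>. X 0 \<omega> * X 2 \<omega>)
      = ((\<integral>\<omega>. X 0 \<omega> ^ 2 \<partial>M) - (\<integral>\<omega>. X 0 \<omega> \<partial>M)\<^sup>2) * (\<integral>\<omega>. X 1 \<omega> \<partial>M) * (\<integral>\<omega>. X 2 \<omega> \<partial>M)"
    using int_X integrable_lognormal_square[OF D] X0 by (intro cov_mult_common_factor[OF indep]) auto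
  then show ?thesis
    unfolding second_moment E1 E2
    by (simp add: power2_eq_square algebra_simps)
qed

theorem theorem2:
  fixes M :: "'a measure"
    and p1 p2 p3 \<delta>1 \<epsilon>a \<epsilon>b :: "nat \<Rightarrow> 'a \<Rightarrow> real"
    and \<mu>1 \<sigma>1 \<sigma>a \<sigma>b k :: real
  assumes "prob_space M"
    and "\<sigma>1 > 0" and "\<sigma>a > 0" and "\<sigma>b > 0" and "k > 0"
    and pos: "\<And>t \<omega>. \<omega> \<in> space M \<Longrightarrow> p1 t \<omega> > 0 \<and> p2 t \<omega> > 0 \<and> p3 t \<omega> > 0"
    and rw: "\<And>t \<omega>. \<omega> \<in> space M \<Longrightarrow> ln (p1 (Suc t) \<omega>) = ln (p1 t \<omega>) + \<mu>1 + \<delta>1 (Suc t) \<omega>"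
    and ea: "\<And>t \<omega>. \<omega> \<in> space M \<Longrightarrow> \<epsilon>a t \<omega> = ln (p2 t \<omega>) - ln (p1 t \<omega>)"
    and eb: "\<And>t \<omega>. \<omega> \<in> space M \<Longrightarrow> \<epsilon>b t \<omega> = ln (p3 t \<omega>) - ln (p1 t \<omega>)"
    and d_dist: "\<And>t. distributed M lborel (\<delta>1 t) (\<lambda>x. ennreal (normal_density 0 \<sigma>1 x))"
    and a_dist: "\<And>t. distributed M lborel (\<epsilon>a t) (\<lambda>x. ennreal (normal_density 0 \<sigma>a x))"
    and b_dist: "\<And>t. distributed M lborel (\<epsilon>b t) (\<lambda>x. ennreal (normal_density 0 \<sigma>b x))"
    and indep: "prob_space.indep_vars M (\<lambda>_. borel) (innov \<delta>1 \<epsilon>a \<epsilon>b) ({0, 1, 2} \<times> UNIV)"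
  shows "cov M (\<lambda>\<omega>. pair_ret k \<sigma>a (\<lambda>t. \<epsilon>a t \<omega>) (\<lambda>t. p1 t \<omega>) (\<lambda>t. p2 t \<omega>) s)
               (\<lambda>\<omega>. pair_ret k \<sigma>b (\<lambda>t. \<epsilon>b t \<omega>) (\<lambda>t. p1 t \<omega>) (\<lambda>t. p3 t \<omega>) s)
         = (exp (\<sigma>1\<^sup>2) - 1)
           * (\<integral>\<omega>. pair_ret k \<sigma>a (\<lambda>t. \<epsilon>a t \<omega>) (\<lambda>t. p1 t \<omega>) (\<lambda>t. p2 t \<omega>) s \<partial>M)
           * (\<integral>\<omega>. pair_ret k \<sigma>b (\<lambda>t. \<epsilon>b t \<omega>) (\<lambda>t. p1 t \<omega>) (\<lambda>t. p3 t \<omega>) s \<partial>M)"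
proof -
  interpret prob_space M by fact
  define X :: "nat \<Rightarrow> 'a \<Rightarrow> real" where "X = (\<lambda>j \<omega>. if j = 0 then exp (\<mu>1 + \<delta>1 (Suc s) \<omega>)
      else if j = 1 then signal k \<sigma>a (\<epsilon>a s \<omega>) * (exp (\<epsilon>a (Suc s) \<omega> - \<epsilon>a s \<omega>) - 1)
      else signal k \<sigma>b (\<epsilon>b s \<omega>) * (exp (\<epsilon>b (Suc s) \<omega> - \<epsilon>b s \<omega>) - 1))"
  have indep_X: "indep_vars (\<lambda>_. borel) X {0, 1, 2}"
    unfolding X_def
    by (rule indep_vars_innov_factors[OF indep, of "\<lambda>x. exp (\<mu>1 + x)"
          "\<lambda>x y. signal k \<sigma>a x * (exp (y - x) - 1)" "\<lambda>x y. signal k \<sigma>b x * (exp (y - x) - 1)"])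
      measurable
  have growth: "p1 (Suc s) \<omega> / p1 s \<omega> = X 0 \<omega>" if "\<omega> \<in> space M" for \<omega>
  proof -
    have "\<mu>1 + \<delta>1 (Suc s) \<omega> = ln (p1 (Suc s) \<omega>) - ln (p1 s \<omega>)"
      using rw[OF that, of s] by simp
    then show ?thesis
      using pos[OF that] by (simp add: X_def exp_diff)
  qed
  have ret_a: "pair_ret k \<sigma>a (\<lambda>t. \<epsilon>a t \<omega>) (\<lambda>t. p1 t \<omega>) (\<lambda>t. p2 t \<omega>) s = X 0 \<omega> * X 1 \<omega>"
    and ret_b: "pair_ret k \<sigma>b (\<lambda>t. \<epsilon>b t \<omega>) (\<lambda>t. p1 t \<omega>) (\<lambda>t. p3 t \<omega>) s = X 0 \<omega> * X 2 \<omega>"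
    if "\<omega> \<in> space M" for \<omega>
    using pos[OF that] ea[OF that] eb[OF that] growth[OF that]
    by (simp_all add: pair_ret_eq_growth_mult) (simp_all add: X_def)
  have "cov M (\<lambda>\<omega>. X 0 \<omega> * X 1 \<omega>) (\<lambda>\<omega>. X 0 \<omega> * X 2 \<omega>)
      = (exp (\<sigma>1\<^sup>2) - 1) * (\<integral>\<omega>. X 0 \<omega> * X 1 \<omega> \<partial>M) * (\<integral>\<omega>. X 0 \<omega> * X 2 \<omega> \<partial>M)"
    using integrable_signal_mult_exp_diff[OF a_dist \<open>\<sigma>a > 0\<close> a_dist \<open>\<sigma>a > 0\<close>]
      integrable_signal_mult_exp_diff[OF b_dist \<open>\<sigma>b > 0\<close> b_dist \<open>\<sigma>b > 0\<close>]
    by (intro cov_mult_lognormal_common_factor[OF indep_X d_dist \<open>\<sigma>1 > 0\<close>]) (simp_all add: X_def)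
  then show ?thesis
    by (simp add: cov_cong[OF ret_a ret_b] Bochner_Integration.integral_cong[OF refl ret_a]
        Bochner_Integration.integral_cong[OF refl ret_b])
qed

end
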